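(* Let $g\in\mathbb{Q}\setminus\{-1,0,1\}$ and $m=p_1^{e_1}\cdots p_r^{e_r}$. The set of integers $u\in S(g)$ with $\gcd(u,m)=1$ and $p_j^{e_j}\nmid\mathrm{ord}_g(u)$ for $1\le j\le r$ is completely multiplicative, i.e. for all natural numbers $x,y$: $xy$ lies in the set if and only if both $x$ and $y$ do.
   Context: $S(g)$ is the set of natural numbers all of whose prime factors $p$ satisfy $\nu_p(g)=0$; for $u\in S(g)$, $\mathrm{ord}_g(u)$ is the multiplicative order of $g$ modulo $u$. *)

theory Defs
  imports "HOL-Number_Theory.Number_Theory"
begin

definition padic_val_rat :: "nat \<Rightarrow> rat \<Rightarrow> int" where
  "padic_val_rat p g = (case quotient_of g of (a, b) \<Rightarrow>
     int (multiplicity (int p) a) - int (multiplicity (int p) b))"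

definition Sg :: "rat \<Rightarrow> nat set" where
  "Sg g = {u. u > 0 \<and> (\<forall>p. prime p \<and> p dvd u \<longrightarrow> padic_val_rat p g = 0)}"

text \<open>Multiplicative order of g = a/b modulo u: least k > 0 with g^k = 1 mod u,
  i.e. a^k = b^k (mod u) (b is invertible mod u for u in S(g)).\<close>
definition ord_rat :: "rat \<Rightarrow> nat \<Rightarrow> nat" where
  "ord_rat g u = (case quotient_of g of (a, b) \<Rightarrow>
     (LEAST k. k > 0 \<and> [a ^ k = b ^ k] (mod int u)))"

definition good_set :: "rat \<Rightarrow> nat \<Rightarrow> nat set" where
  "good_set g m = {u \<in> Sg g. coprime u m \<and>
     (\<forall>p \<in> prime_factors m. \<not> p ^ multiplicity p m dvd ord_rat g u)}"

end

theory Submission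
  imports Defs
begin

(* Write g = a/b in lowest terms. For u, v in S(g), ord_g u and ord_g v divide ord_g (u v) since
   u and v divide u v. Conversely a^L = b^L modulo lcm(u, v) for L = lcm(ord_g u, ord_g v), and
   raising to the power gcd(u, v) lifts this congruence to the modulus lcm(u, v) gcd(u, v) = u v,
   so ord_g (u v) divides L gcd(u, v). If u is coprime to m, no prime p dividing m divides
   gcd(u, v), hence p^e divides ord_g (u v) iff it divides L, iff it divides ord_g u or ord_g v.
   Membership in S(g) and coprimality with m are multiplicative anyway. *)

lemma coprime_int_of_nat_if_no_common_prime:
  fixes a :: int and n :: nat
  assumes "\<And>p. prime p \<Longrightarrow> p dvd n \<Longrightarrow> \<not> int p dvd a"
  shows "coprime a (int n)"
proof (rule ccontr)
  assume "\<not> coprime a (int n)"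
  then obtain q :: int where "prime q" "q dvd gcd a (int n)"
    by (metis coprime_iff_gcd_eq_1 prime_factor_int abs_gcd_int)
  then have q: "prime q" "q dvd a" "q dvd int n"
    by auto
  then have "int (nat q) = q"
    by (simp add: prime_ge_0_int)
  with q have "prime (nat q)" "nat q dvd n" "int (nat q) dvd a"
    by (simp_all, metis of_nat_dvd_iff)
  with assms show False
    by blast
qed

lemma not_dvd_quotient_of_if_padic_val_rat_eq_0:
  assumes "prime p" "padic_val_rat p g = 0" "g \<noteq> 0" "quotient_of g = (a, b)"
  shows "\<not> int p dvd a \<and> \<not> int p dvd b"
proof -
  have "a \<noteq> 0" "b \<noteq> 0"
    using assms(3,4) quotient_of_denom_pos[OF assms(4)] quotient_of_div[OF assms(4)] by auto
  have "\<not> is_unit (int p)"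
    using assms(1) prime_ge_2_nat by auto
  have "multiplicity (int p) a = multiplicity (int p) b"
    using assms(2,4) by (simp add: padic_val_rat_def)
  then have "int p dvd a \<longleftrightarrow> int p dvd b"
    using \<open>a \<noteq> 0\<close> \<open>b \<noteq> 0\<close> \<open>\<not> is_unit (int p)\<close> by (metis multiplicity_gt_zero_iff)
  moreover have "\<not> (int p dvd a \<and> int p dvd b)"
    using quotient_of_coprime[OF assms(4)] \<open>\<not> is_unit (int p)\<close> coprime_common_divisor by blast
  ultimately show ?thesis
    by blast
qed

lemma prime_power_dvd_lcm_iff:
  fixes A B :: "'a :: factorial_semiring_gcd"
  assumes "prime p"
  shows "p ^ e dvd lcm A B \<longleftrightarrow> p ^ e dvd A \<or> p ^ e dvd B"
proof (cases "A = 0 \<or> B = 0")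
  case False
  have "\<not> is_unit p"
    using assms by auto
  have "p ^ e dvd lcm A B \<longleftrightarrow> e \<le> multiplicity p (lcm A B)"
    using False \<open>\<not> is_unit p\<close> by (intro power_dvd_iff_le_multiplicity) (auto simp: lcm_eq_0_iff)
  also have "\<dots> \<longleftrightarrow> e \<le> multiplicity p A \<or> e \<le> multiplicity p B"
    using False assms by (simp add: multiplicity_lcm le_max_iff_disj)
  also have "\<dots> \<longleftrightarrow> p ^ e dvd A \<or> p ^ e dvd B"
    using False \<open>\<not> is_unit p\<close> power_dvd_iff_le_multiplicity by metis
  finally show ?thesis .
qed auto

lemma cong_pow_mult_modulus:
  fixes A B l :: int and k :: nat
  assumes "[A = B] (mod l)" and "int k dvd l"
  shows "[A ^ k = B ^ k] (mod l * int k)"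
proof -
  define S where "S = (\<Sum>i<k. B ^ (k - Suc i) * A ^ i)"
  have diff: "A ^ k - B ^ k = (A - B) * S"
    unfolding S_def by (rule power_diff_sumr2)
  have "[S = (\<Sum>i<k. B ^ (k - Suc i) * B ^ i)] (mod l)"
    unfolding S_def by (intro cong_sum cong_mult cong_refl cong_pow assms(1))
  also have "(\<Sum>i<k. B ^ (k - Suc i) * B ^ i) = int k * B ^ (k - 1)"
    by (simp flip: power_add)
  finally have "[S = int k * B ^ (k - 1)] (mod int k)"
    using assms(2) by (rule cong_dvd_modulus)
  then have "int k dvd S"
    by (simp add: cong_dvd_iff)
  moreover have "l dvd A - B"
    using assms(1) by (simp add: cong_iff_dvd_diff)
  ultimately show ?thesis
    by (simp add: cong_iff_dvd_diff diff mult_dvd_mono)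
qed

lemma pow_cong_cancel:
  fixes a b n :: int
  assumes "coprime b n" and "[a ^ (j + k) = b ^ (j + k)] (mod n)" and "[a ^ k = b ^ k] (mod n)"
  shows "[a ^ j = b ^ j] (mod n)"
proof -
  have "[a ^ j * b ^ k = a ^ j * a ^ k] (mod n)"
    using assms(3) by (intro cong_scalar_left) (rule cong_sym)
  also have "[a ^ j * a ^ k = b ^ j * b ^ k] (mod n)"
    using assms(2) by (simp add: power_add)
  finally show ?thesis
    using assms(1) by (simp add: cong_mult_rcancel)
qed

lemma Least_pow_cong_dvd_iff:
  fixes a b n :: int
  assumes "coprime b n" and "k0 > 0" and "[a ^ k0 = b ^ k0] (mod n)"
  shows "(LEAST k. k > 0 \<and> [a ^ k = b ^ k] (mod n)) dvd k \<longleftrightarrow> [a ^ k = b ^ k] (mod n)"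
proof -
  define d where "d = (LEAST k. k > 0 \<and> [a ^ k = b ^ k] (mod n))"
  have d: "d > 0" "[a ^ d = b ^ d] (mod n)"
    unfolding d_def by (rule LeastI2_ex, use assms(2,3) in blast, simp)+
  have multiples: "[a ^ (d * q) = b ^ (d * q)] (mod n)" for q
    using cong_pow[OF d(2), of q] by (simp add: power_mult)
  show ?thesis
    unfolding d_def[symmetric]
  proof
    assume "d dvd k"
    then show "[a ^ k = b ^ k] (mod n)"
      using multiples by (auto elim: dvdE)
  next
    assume k: "[a ^ k = b ^ k] (mod n)"
    have "[a ^ (k mod d) = b ^ (k mod d)] (mod n)"
      using pow_cong_cancel[OF assms(1), of _ "k mod d" "d * (k div d)"] k multiples
      by (simp add: mod_mult_div_eq)
    moreover have "\<not> (k mod d > 0 \<and> [a ^ (k mod d) = b ^ (k mod d)] (mod n))"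
      using d(1) unfolding d_def by (intro not_less_Least) simp
    ultimately have "k mod d = 0"
      by simp
    then show "d dvd k"
      by auto
  qed
qed

lemma pow_cong_totient:
  fixes a b :: int and n :: nat
  assumes "coprime a (int n)" and "coprime b (int n)"
  shows "[a ^ totient n = b ^ totient n] (mod int n)"
proof (cases "n \<le> 1")
  case True
  then show ?thesis
    by (auto simp: le_Suc_eq)
next
  case False
  then have "residues (int n)"
    by (simp add: residues_def)
  then have "[a ^ totient n = 1] (mod int n)" "[b ^ totient n = 1] (mod int n)"
    using residues.euler_theorem assms by fastforce+
  then show ?thesis
    by (metis cong_sym cong_trans)
qed

lemma Sg_mult_iff: "x * y \<in> Sg g \<longleftrightarrow> x \<in> Sg g \<and> y \<in> Sg g"
  unfolding Sg_def by (auto simp: prime_dvd_mult_iff)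

lemma coprime_quotient_of_Sg:
  assumes "g \<noteq> 0" and "quotient_of g = (a, b)" and "u \<in> Sg g"
  shows "coprime a (int u)" and "coprime b (int u)"
  using assms not_dvd_quotient_of_if_padic_val_rat_eq_0
  by (auto intro!: coprime_int_of_nat_if_no_common_prime simp: Sg_def)

lemma ord_rat_dvd_iff:
  assumes "g \<noteq> 0" and "quotient_of g = (a, b)" and "u \<in> Sg g"
  shows "ord_rat g u dvd k \<longleftrightarrow> [a ^ k = b ^ k] (mod int u)"
proof -
  note coprime = coprime_quotient_of_Sg[OF assms]
  have "totient u > 0"
    using assms(3) by (simp add: Sg_def)
  from Least_pow_cong_dvd_iff[OF coprime(2) this pow_cong_totient[OF coprime]] show ?thesis
    using assms(2) by (simp add: ord_rat_def)
qed

lemma dvd_imp_ord_rat_dvd: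
  assumes "g \<noteq> 0" and "u \<in> Sg g" and "v \<in> Sg g" and "v dvd u"
  shows "ord_rat g v dvd ord_rat g u"
proof -
  obtain a b where q: "quotient_of g = (a, b)"
    by fastforce
  have "[a ^ ord_rat g u = b ^ ord_rat g u] (mod int u)"
    using ord_rat_dvd_iff[OF assms(1) q assms(2), of "ord_rat g u"] by simp
  then have "[a ^ ord_rat g u = b ^ ord_rat g u] (mod int v)"
    using assms(4) by (simp add: cong_dvd_modulus)
  then show ?thesis
    using ord_rat_dvd_iff[OF assms(1) q assms(3)] by simp
qed

lemma ord_rat_mult_dvd:
  assumes "g \<noteq> 0" and "x \<in> Sg g" and "y \<in> Sg g"
  shows "ord_rat g (x * y) dvd lcm (ord_rat g x) (ord_rat g y) * gcd x y"
proof -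
  obtain a b where q: "quotient_of g = (a, b)"
    by fastforce
  define L where "L = lcm (ord_rat g x) (ord_rat g y)"
  have "[a ^ L = b ^ L] (mod int x)" "[a ^ L = b ^ L] (mod int y)"
    using ord_rat_dvd_iff[OF assms(1) q, symmetric] assms(2,3) by (simp_all add: L_def)
  then have "[a ^ L = b ^ L] (mod lcm (int x) (int y))"
    by (rule cong_cong_lcm_int)
  moreover have "int (gcd x y) dvd lcm (int x) (int y)"
    by (metis dvd_lcm1 dvd_trans gcd_dvd1 gcd_int_int_eq)
  ultimately have "[(a ^ L) ^ gcd x y = (b ^ L) ^ gcd x y] (mod lcm (int x) (int y) * int (gcd x y))"
    by (rule cong_pow_mult_modulus)
  moreover have "lcm (int x) (int y) * int (gcd x y) = int (x * y)"
    by (simp flip: of_nat_mult)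
  ultimately have "[a ^ (L * gcd x y) = b ^ (L * gcd x y)] (mod int (x * y))"
    by (simp add: power_mult)
  then show ?thesis
    using ord_rat_dvd_iff[OF assms(1) q] assms(2,3) by (simp add: Sg_mult_iff L_def)
qed

lemma prime_power_dvd_ord_rat_mult_iff:
  assumes "g \<noteq> 0" and "x \<in> Sg g" and "y \<in> Sg g" and "prime p" and "\<not> p dvd gcd x y"
  shows "p ^ e dvd ord_rat g (x * y) \<longleftrightarrow> p ^ e dvd ord_rat g x \<or> p ^ e dvd ord_rat g y"
proof
  assume "p ^ e dvd ord_rat g (x * y)"
  then have "p ^ e dvd lcm (ord_rat g x) (ord_rat g y) * gcd x y"
    using ord_rat_mult_dvd[OF assms(1-3)] by (rule dvd_trans)
  moreover have "coprime (p ^ e) (gcd x y)"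
    using prime_imp_power_coprime[OF assms(4,5)] by (simp add: coprime_commute)
  ultimately have "p ^ e dvd lcm (ord_rat g x) (ord_rat g y)"
    by (simp add: coprime_dvd_mult_left_iff)
  then show "p ^ e dvd ord_rat g x \<or> p ^ e dvd ord_rat g y"
    using prime_power_dvd_lcm_iff[OF assms(4)] by blast
next
  have "x * y \<in> Sg g"
    using assms(2,3) by (simp add: Sg_mult_iff)
  then have "ord_rat g x dvd ord_rat g (x * y)" "ord_rat g y dvd ord_rat g (x * y)"
    using dvd_imp_ord_rat_dvd[OF assms(1)] assms(2,3) by simp_all
  then show "p ^ e dvd ord_rat g x \<or> p ^ e dvd ord_rat g y \<Longrightarrow> p ^ e dvd ord_rat g (x * y)"
    by (auto intro: dvd_trans)
qed

theorem lemma5: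
  fixes g :: rat and m :: nat
  assumes "g \<notin> {-1, 0, 1}" and "m > 0"
  shows "\<forall>x y :: nat. x * y \<in> good_set g m \<longleftrightarrow> x \<in> good_set g m \<and> y \<in> good_set g m"
proof (intro allI)
  fix x y :: nat
  have "g \<noteq> 0"
    using assms(1) by simp
  show "x * y \<in> good_set g m \<longleftrightarrow> x \<in> good_set g m \<and> y \<in> good_set g m"
  proof (cases "x \<in> Sg g \<and> y \<in> Sg g \<and> coprime x m \<and> coprime y m")
    case False
    then show ?thesis
      by (auto simp: good_set_def Sg_mult_iff)
  next
    case True
    have "p ^ e dvd ord_rat g (x * y) \<longleftrightarrow> p ^ e dvd ord_rat g x \<or> p ^ e dvd ord_rat g y"
      if "p \<in> prime_factors m" for p e
    proof (rule prime_power_dvd_ord_rat_mult_iff[OF \<open>g \<noteq> 0\<close>])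
      show "prime p"
        using that by auto
      have "\<not> p dvd x"
        using True that \<open>prime p\<close> coprime_common_divisor not_prime_unit by blast
      then show "\<not> p dvd gcd x y"
        by (meson dvd_trans gcd_dvd1)
    qed (use True in auto)
    then have "(\<forall>p \<in> prime_factors m. \<not> p ^ multiplicity p m dvd ord_rat g (x * y)) \<longleftrightarrow>
        (\<forall>p \<in> prime_factors m. \<not> p ^ multiplicity p m dvd ord_rat g x) \<and>
        (\<forall>p \<in> prime_factors m. \<not> p ^ multiplicity p m dvd ord_rat g y)"
      by blast
    moreover have "x * y \<in> Sg g" "coprime (x * y) m"
      using True by (simp_all add: Sg_mult_iff)
    ultimately show ?thesis
      using True unfolding good_set_def mem_Collect_eq by blast
  qed
qed

end
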